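(* Let $n\ge2$, $\omega\in(0,1)$, and let $B_1,\dots,B_n$ be independent lognormal service times with $m_i=\mathbb E\ln B_i$, $s_i^2=\mathrm{Var}\ln B_i$, $m_1\le\cdots\le m_n$, $s_1^2\le\cdots\le s_n^2$. Then for every sequence $\tau\in\mathsf S_n$ and every schedule $\boldsymbol x$, $$C(\tau,\boldsymbol x,\omega)\ge\bigl[(1-\omega)\,\mathbb P(Z\ge Q_Z(1-\omega)-s_1)-\omega\,\mathbb P(Z\le Q_Z(1-\omega)-s_1)\bigr]\sum_{i=1}^{n-1}\exp(m_i+s_i^2/2),$$ where $Z$ is standard normal and $Q_Z(y)=\inf\{x:y\le\mathbb P(Z\le x)\}$.
   Context: Appointment model: a sequence is a permutation $\tau\in\mathsf S_n$, $\tau(i)$ the patient in slot $i$; a schedule is $\boldsymbol x=(x_1,\dots,x_n)\in\mathbb R_+^n$, $x_j$ the interarrival time between patient $j$ and the next patient. Waiting and idle times: $W_1=I_1=0$, $W_{i+1}=(W_i+B_{\tau(i)}-x_{\tau(i)})^+$, $I_{i+1}=(W_i+B_{\tau(i)}-x_{\tau(i)})^-$, $a^+=\max\{0,a\}$, $a^-=\max\{0,-a\}$. Cost $C(\tau,\boldsymbol x,\omega)=\omega\sum_{i=1}^n\mathbb EI_i+(1-\omega)\sum_{i=1}^n\mathbb EW_i$. *)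

theory Defs
  imports "HOL-Probability.Probability"
begin

text \<open>Waiting time of the patient in slot k (slots numbered 1..n), given the
sequence tau (tau k = patient in slot k), the schedule x (x j = interarrival time
after patient j) and realized service times b (b j = service time of patient j).\<close>
fun wait :: "(nat \<Rightarrow> nat) \<Rightarrow> (nat \<Rightarrow> real) \<Rightarrow> (nat \<Rightarrow> real) \<Rightarrow> nat \<Rightarrow> real" where
  "wait tau x b 0 = 0"
| "wait tau x b (Suc 0) = 0"
| "wait tau x b (Suc (Suc i)) = max 0 (wait tau x b (Suc i) + b (tau (Suc i)) - x (tau (Suc i)))"

fun idle :: "(nat \<Rightarrow> nat) \<Rightarrow> (nat \<Rightarrow> real) \<Rightarrow> (nat \<Rightarrow> real) \<Rightarrow> nat \<Rightarrow> real" where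
  "idle tau x b 0 = 0"
| "idle tau x b (Suc 0) = 0"
| "idle tau x b (Suc (Suc i)) = max 0 (- (wait tau x b (Suc i) + b (tau (Suc i)) - x (tau (Suc i))))"

definition cost :: "'a measure \<Rightarrow> (nat \<Rightarrow> 'a \<Rightarrow> real) \<Rightarrow> nat \<Rightarrow> (nat \<Rightarrow> nat) \<Rightarrow> (nat \<Rightarrow> real) \<Rightarrow> real \<Rightarrow> real" where
  "cost M B n tau x w =
     w * (\<Sum>i=1..n. integral\<^sup>L M (\<lambda>\<xi>. idle tau x (\<lambda>j. B j \<xi>) i))
     + (1 - w) * (\<Sum>i=1..n. integral\<^sup>L M (\<lambda>\<xi>. wait tau x (\<lambda>j. B j \<xi>) i))"

definition std_normal :: "real measure" where
  "std_normal = density lborel std_normal_density"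

definition Phi :: "real \<Rightarrow> real" where
  "Phi t = measure std_normal {..t}"

definition Q_Z :: "real \<Rightarrow> real" where
  "Q_Z y = Inf {t. y \<le> Phi t}"

definition lognormal_rv :: "'a measure \<Rightarrow> ('a \<Rightarrow> real) \<Rightarrow> real \<Rightarrow> real \<Rightarrow> bool" where
  "lognormal_rv M X mu sd \<longleftrightarrow>
     X \<in> borel_measurable M \<and> 0 < sd \<and> (AE \<xi> in M. 0 < X \<xi>) \<and>
     distributed M lborel (\<lambda>\<xi>. ln (X \<xi>)) (normal_density mu sd)"

end

theory Submission
  imports Defs
begin

(* Fix a slot k < n, let p = tau k be its patient and D = W_k + B_p - x_p, so that
   W_(k+1) = D^+ and I_(k+1) = D^-.  Put z = Q_Z (1 - w) and test D against the two-valued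
   function L(b) = 1 - w for b >= exp (m_p + s_p z), L(b) = -w otherwise: pointwise
   L(B_p) D <= w D^- + (1 - w) D^+.  As P(B_p >= exp (m_p + s_p z)) = 1 - Phi z = w, the
   variable L(B_p) has mean zero, and it is independent of W_k, which only depends on the
   service times of earlier slots.  Hence the expected cost of slot k + 1 is at least
   E[L(B_p) B_p] = exp (m_p + s_p^2/2) ((1 - w) - Phi (z - s_p)), computed by exponentially
   tilting the normal law of ln B_p.  The second factor is nonnegative and increasing in s_p,
   hence at least its value at s_1.  Summing over the slots k = 1..n-1 leaves out only the
   patient tau n, whose mean exp (m + s^2/2) is at most that of patient n. *)

lemma real_distribution_std_normal: "real_distribution std_normal"
  unfolding real_distribution_def real_distribution_axioms_def std_normal_def
  by (auto intro: prob_space_normal_density)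

interpretation std_normal: real_distribution std_normal
  by (rule real_distribution_std_normal)

lemma Phi_eq_cdf: "Phi = cdf std_normal"
  by (simp add: Phi_def cdf_def fun_eq_iff)

lemma measure_std_normal_singleton: "measure std_normal {c} = 0"
  by (simp add: std_normal_def measure_def emeasure_density nn_integral_indicator_singleton)

lemma isCont_Phi: "isCont Phi c"
  by (simp add: Phi_eq_cdf std_normal.isCont_cdf measure_std_normal_singleton)

lemma mono_Phi: "mono Phi"
  by (simp add: Phi_eq_cdf monoI std_normal.cdf_nondecreasing)

lemma measure_std_normal_lessThan: "measure std_normal {..<c} = Phi c"
proof -
  have "Phi c = measure std_normal ({..<c} \<union> {c})"
    by (simp add: Phi_def ivl_disj_un(2)[symmetric])
  also have "\<dots> = measure std_normal {..<c} + measure std_normal {c}"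
    by (subst std_normal.finite_measure_Union) auto
  finally show ?thesis by (simp add: measure_std_normal_singleton)
qed

lemma measure_std_normal_atLeast: "measure std_normal {c..} = 1 - Phi c"
  using std_normal.prob_compl[of "{..<c}"]
  by (simp add: measure_std_normal_lessThan Compl_eq_Diff_UNIV[symmetric])

lemma Phi_Q_Z:
  assumes "0 < y" "y < 1"
  shows "Phi (Q_Z y) = y"
proof -
  let ?S = "{t. y \<le> Phi t}"
  have "\<forall>\<^sub>F t in at_top. y < Phi t"
    using std_normal.cdf_lim_at_top_prob assms(2) unfolding Phi_eq_cdf by (rule order_tendstoD)
  then obtain t1 where "y < Phi t1" by (auto simp: eventually_at_top_linorder)
  then have ne: "?S \<noteq> {}" by (auto intro: less_imp_le)
  have "\<forall>\<^sub>F t in at_bot. Phi t < y"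
    using std_normal.cdf_lim_at_bot assms(1) unfolding Phi_eq_cdf by (rule order_tendstoD)
  then obtain t0 where t0: "\<And>t. t \<le> t0 \<Longrightarrow> Phi t < y" by (auto simp: eventually_at_bot_linorder)
  have bdd: "bdd_below ?S"
  proof (rule bdd_belowI)
    fix t assume "t \<in> ?S"
    then show "t0 \<le> t" using t0[of t] by force
  qed
  have "closed ?S"
    using isCont_Phi by (intro closed_Collect_le continuous_intros) (simp add: continuous_at_imp_continuous_on)
  then have "y \<le> Phi (Q_Z y)"
    using closed_contains_Inf[OF ne bdd] by (simp add: Q_Z_def)
  moreover have "Phi (Q_Z y) \<le> y"
  proof (rule tendsto_upperbound)
    show "(Phi \<longlongrightarrow> Phi (Q_Z y)) (at_left (Q_Z y))"
      using isCont_Phi by (simp add: isCont_def filterlim_at_split)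
    have "Phi t \<le> y" if "t < Q_Z y" for t
      using that cInf_lower[OF _ bdd, of t] unfolding Q_Z_def by force
    then show "\<forall>\<^sub>F t in at_left (Q_Z y). Phi t \<le> y"
      by (intro eventually_at_leftI[of "Q_Z y - 1"]) auto
  qed simp
  ultimately show ?thesis by simp
qed

lemma Phi_Q_Z_minus_le:
  assumes "0 < y" "y < 1" and "0 \<le> \<sigma>" "\<sigma> \<le> \<sigma>'"
  shows "Phi (Q_Z y - \<sigma>') \<le> Phi (Q_Z y - \<sigma>)" and "Phi (Q_Z y - \<sigma>) \<le> y"
  using assms monoD[OF mono_Phi, of "Q_Z y - \<sigma>'" "Q_Z y - \<sigma>"] monoD[OF mono_Phi, of "Q_Z y - \<sigma>" "Q_Z y"]
  by (simp_all add: Phi_Q_Z)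

lemma integral_std_normal_step:
  "(\<integral>v. std_normal_density v * (if c \<le> v then \<alpha> else \<beta>) \<partial>lborel) = \<alpha> * (1 - Phi c) + \<beta> * Phi c"
proof -
  have "(\<integral>v. std_normal_density v * (if c \<le> v then \<alpha> else \<beta>) \<partial>lborel)
      = (\<integral>v. \<alpha> + (\<beta> - \<alpha>) * indicator {..<c} v \<partial>std_normal)"
    unfolding std_normal_def
    by (subst integral_real_density) (auto intro!: Bochner_Integration.integral_cong simp: indicator_def)
  also have "\<dots> = \<alpha> + (\<beta> - \<alpha>) * Phi c"
    by (simp add: measure_std_normal_lessThan std_normal.integrable_const_bound[where B=1] std_normal.prob_space[simplified])
  finally show ?thesis by (simp add: algebra_simps)
qed

lemma normal_density_affine_std:
  assumes "0 < \<sigma>"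
  shows "normal_density \<mu> \<sigma> (\<mu> + \<sigma> * u) = std_normal_density u / \<sigma>"
  using assms by (simp add: normal_density_def std_normal_density_def real_sqrt_mult power_mult_distrib)

lemma integral_normal_density_affine:
  assumes "0 < \<sigma>"
  shows "(\<integral>t. normal_density \<mu> \<sigma> t * F t \<partial>lborel)
    = (\<integral>u. std_normal_density u * F (\<mu> + \<sigma> * u) \<partial>lborel)"
  using assms
  by (subst lborel_integral_real_affine[where c=\<sigma> and t=\<mu>]) (auto simp: normal_density_affine_std)

lemma integral_normal_density_step:
  assumes "0 < \<sigma>"
  shows "(\<integral>t. normal_density \<mu> \<sigma> t * (if \<mu> + \<sigma> * c \<le> t then \<alpha> else \<beta>) \<partial>lborel)
    = \<alpha> * (1 - Phi c) + \<beta> * Phi c"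
  using assms by (simp add: integral_normal_density_affine integral_std_normal_step)

lemma integrable_normal_density_bounded:
  fixes F :: "real \<Rightarrow> real"
  assumes "0 < \<sigma>" and [measurable]: "F \<in> borel_measurable borel" and "\<And>t. \<bar>F t\<bar> \<le> K"
  shows "integrable lborel (\<lambda>t. normal_density \<mu> \<sigma> t * F t)"
proof (rule Bochner_Integration.integrable_bound)
  show "integrable lborel (\<lambda>t. K * normal_density \<mu> \<sigma> t)"
    using assms(1) by (intro integrable_mult_right integrable_normal_density)
  show "AE t in lborel. norm (normal_density \<mu> \<sigma> t * F t) \<le> norm (K * normal_density \<mu> \<sigma> t)"
  proof (intro AE_I2)
    fix t
    have "\<bar>F t\<bar> * normal_density \<mu> \<sigma> t \<le> \<bar>K\<bar> * normal_density \<mu> \<sigma> t"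
      using assms(3)[of t] by (intro mult_right_mono) auto
    then show "norm (normal_density \<mu> \<sigma> t * F t) \<le> norm (K * normal_density \<mu> \<sigma> t)"
      by (simp add: abs_mult mult.commute)
  qed
qed simp

lemma normal_density_mult_exp:
  assumes "0 < \<sigma>"
  shows "normal_density \<mu> \<sigma> t * exp t = exp (\<mu> + \<sigma>\<^sup>2 / 2) * normal_density (\<mu> + \<sigma>\<^sup>2) \<sigma> t"
proof -
  have "-(t - \<mu>)\<^sup>2 / (2 * \<sigma>\<^sup>2) + t
      = (\<mu> + \<sigma>\<^sup>2 / 2) + -(t - (\<mu> + \<sigma>\<^sup>2))\<^sup>2 / (2 * \<sigma>\<^sup>2)"
    using assms by (simp add: field_simps power2_eq_square)
  then show ?thesis
    by (simp add: normal_density_def exp_add[symmetric])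
qed

lemma lognormal_rv_integral:
  assumes "lognormal_rv M X \<mu> \<sigma>" and "F \<in> borel_measurable borel"
    and "integrable lborel (\<lambda>t. normal_density \<mu> \<sigma> t * F t)"
  shows "integrable M (\<lambda>\<xi>. F (ln (X \<xi>)))"
    and "(\<integral>\<xi>. F (ln (X \<xi>)) \<partial>M) = (\<integral>t. normal_density \<mu> \<sigma> t * F t \<partial>lborel)"
  using assms distributed_integrable[of M lborel "\<lambda>\<xi>. ln (X \<xi>)" "normal_density \<mu> \<sigma>" F]
    distributed_integral[of M lborel "\<lambda>\<xi>. ln (X \<xi>)" "normal_density \<mu> \<sigma>" F]
  by (auto simp: lognormal_rv_def)

lemma lognormal_rv_step:
  fixes c \<alpha> \<beta> :: real
  assumes LN: "lognormal_rv M X \<mu> \<sigma>"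
  shows "integrable M (\<lambda>\<xi>. if exp (\<mu> + \<sigma> * c) \<le> X \<xi> then \<alpha> else \<beta>)"
    and "(\<integral>\<xi>. (if exp (\<mu> + \<sigma> * c) \<le> X \<xi> then \<alpha> else \<beta>) \<partial>M)
      = \<alpha> * (1 - Phi c) + \<beta> * Phi c"
proof -
  define F where "F t = (if \<mu> + \<sigma> * c \<le> t then \<alpha> else \<beta>)" for t
  have \<sigma>: "0 < \<sigma>" and [measurable]: "X \<in> borel_measurable M" and pos: "AE \<xi> in M. 0 < X \<xi>"
    using LN by (auto simp: lognormal_rv_def)
  from pos have ae: "AE \<xi> in M. (if exp (\<mu> + \<sigma> * c) \<le> X \<xi> then \<alpha> else \<beta>) = F (ln (X \<xi>))"
    by eventually_elim (simp add: F_def ln_ge_iff)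
  have [measurable]: "F \<in> borel_measurable borel"
    unfolding F_def by measurable
  have int: "integrable lborel (\<lambda>t. normal_density \<mu> \<sigma> t * F t)"
    using \<sigma> by (rule integrable_normal_density_bounded[where K="\<bar>\<alpha>\<bar> + \<bar>\<beta>\<bar>"]) (auto simp: F_def)
  show "integrable M (\<lambda>\<xi>. if exp (\<mu> + \<sigma> * c) \<le> X \<xi> then \<alpha> else \<beta>)"
    using integrable_cong_AE_imp[OF lognormal_rv_integral(1)[OF LN _ int] _ ae[THEN AE_symmetric]] by simp
  have "(\<integral>\<xi>. (if exp (\<mu> + \<sigma> * c) \<le> X \<xi> then \<alpha> else \<beta>) \<partial>M)
      = (\<integral>\<xi>. F (ln (X \<xi>)) \<partial>M)"
    by (rule integral_cong_AE) (use ae in auto)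
  also have "\<dots> = (\<integral>t. normal_density \<mu> \<sigma> t * F t \<partial>lborel)"
    by (rule lognormal_rv_integral(2)[OF LN _ int]) simp
  also have "\<dots> = \<alpha> * (1 - Phi c) + \<beta> * Phi c"
    using \<sigma> by (simp add: F_def integral_normal_density_step)
  finally show "(\<integral>\<xi>. (if exp (\<mu> + \<sigma> * c) \<le> X \<xi> then \<alpha> else \<beta>) \<partial>M)
      = \<alpha> * (1 - Phi c) + \<beta> * Phi c" .
qed

lemma lognormal_rv_step_mult:
  fixes c \<alpha> \<beta> :: real
  assumes LN: "lognormal_rv M X \<mu> \<sigma>"
  shows "integrable M (\<lambda>\<xi>. (if exp (\<mu> + \<sigma> * c) \<le> X \<xi> then \<alpha> else \<beta>) * X \<xi>)"
    and "(\<integral>\<xi>. (if exp (\<mu> + \<sigma> * c) \<le> X \<xi> then \<alpha> else \<beta>) * X \<xi> \<partial>M)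
      = exp (\<mu> + \<sigma>\<^sup>2 / 2) * (\<alpha> * (1 - Phi (c - \<sigma>)) + \<beta> * Phi (c - \<sigma>))"
proof -
  define \<mu>' where "\<mu>' = \<mu> + \<sigma>\<^sup>2"
  define F where "F t = (if \<mu>' + \<sigma> * (c - \<sigma>) \<le> t then \<alpha> else \<beta>)" for t
  have \<sigma>: "0 < \<sigma>" and [measurable]: "X \<in> borel_measurable M" and pos: "AE \<xi> in M. 0 < X \<xi>"
    using LN by (auto simp: lognormal_rv_def)
  have threshold: "\<mu>' + \<sigma> * (c - \<sigma>) = \<mu> + \<sigma> * c"
    by (simp add: \<mu>'_def algebra_simps power2_eq_square)
  from pos have ae: "AE \<xi> in M.
      (if exp (\<mu> + \<sigma> * c) \<le> X \<xi> then \<alpha> else \<beta>) * X \<xi> = F (ln (X \<xi>)) * exp (ln (X \<xi>))"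
    by eventually_elim (simp add: F_def threshold ln_ge_iff)
  have [measurable]: "F \<in> borel_measurable borel"
    unfolding F_def by measurable
  have tilt: "normal_density \<mu> \<sigma> t * (F t * exp t) = exp (\<mu> + \<sigma>\<^sup>2 / 2) * (normal_density \<mu>' \<sigma> t * F t)" for t
    using normal_density_mult_exp[OF \<sigma>, of \<mu> t] by (simp add: \<mu>'_def mult_ac)
  have int: "integrable lborel (\<lambda>t. normal_density \<mu> \<sigma> t * (F t * exp t))"
    unfolding tilt using \<sigma>
    by (intro integrable_mult_right integrable_normal_density_bounded[where K="\<bar>\<alpha>\<bar> + \<bar>\<beta>\<bar>"]) (auto simp: F_def)
  show "integrable M (\<lambda>\<xi>. (if exp (\<mu> + \<sigma> * c) \<le> X \<xi> then \<alpha> else \<beta>) * X \<xi>)"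
    using integrable_cong_AE_imp[OF lognormal_rv_integral(1)[OF LN _ int] _ ae[THEN AE_symmetric]] by simp
  have "(\<integral>\<xi>. (if exp (\<mu> + \<sigma> * c) \<le> X \<xi> then \<alpha> else \<beta>) * X \<xi> \<partial>M)
      = (\<integral>\<xi>. F (ln (X \<xi>)) * exp (ln (X \<xi>)) \<partial>M)"
    by (rule integral_cong_AE) (use ae in auto)
  also have "\<dots> = (\<integral>t. normal_density \<mu> \<sigma> t * (F t * exp t) \<partial>lborel)"
    by (rule lognormal_rv_integral(2)[OF LN _ int]) simp
  also have "\<dots> = exp (\<mu> + \<sigma>\<^sup>2 / 2) * (\<integral>t. normal_density \<mu>' \<sigma> t * F t \<partial>lborel)"
    by (simp add: tilt)
  also have "\<dots> = exp (\<mu> + \<sigma>\<^sup>2 / 2) * (\<alpha> * (1 - Phi (c - \<sigma>)) + \<beta> * Phi (c - \<sigma>))"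
    using \<sigma> by (simp add: F_def integral_normal_density_step)
  finally show "(\<integral>\<xi>. (if exp (\<mu> + \<sigma> * c) \<le> X \<xi> then \<alpha> else \<beta>) * X \<xi> \<partial>M)
      = exp (\<mu> + \<sigma>\<^sup>2 / 2) * (\<alpha> * (1 - Phi (c - \<sigma>)) + \<beta> * Phi (c - \<sigma>))" .
qed

lemma lognormal_rv_integrable:
  assumes "lognormal_rv M X \<mu> \<sigma>"
  shows "integrable M X"
  using lognormal_rv_step_mult(1)[OF assms, of 0 1 1] by simp

lemma wait_Suc:
  "wait tau x b (Suc k) = (if k = 0 then 0 else max 0 (wait tau x b k + b (tau k) - x (tau k)))"
  by (cases k) auto

lemma idle_Suc:
  "idle tau x b (Suc k) = (if k = 0 then 0 else max 0 (- (wait tau x b k + b (tau k) - x (tau k))))"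
  by (cases k) auto

lemma wait_cong:
  "(\<And>j. 1 \<le> j \<Longrightarrow> j < k \<Longrightarrow> b (tau j) = b' (tau j)) \<Longrightarrow> wait tau x b k = wait tau x b' k"
  by (induction k) (auto simp: wait_Suc)

lemma wait_measurable_PiM:
  "(\<And>j. 1 \<le> j \<Longrightarrow> j < k \<Longrightarrow> tau j \<in> K) \<Longrightarrow>
     (\<lambda>b. wait tau x b k) \<in> borel_measurable (PiM K (\<lambda>_. borel :: real measure))"
proof (induction k)
  case (Suc k)
  then have [measurable]: "(\<lambda>b. wait tau x b k) \<in> borel_measurable (PiM K (\<lambda>_. borel))"
    by simp
  show ?case
  proof (cases "k = 0")
    case False
    with Suc.prems have "tau k \<in> K" by simp
    then have [measurable]: "(\<lambda>b. b (tau k)) \<in> borel_measurable (PiM K (\<lambda>_. borel))"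
      by (rule measurable_component_singleton)
    have eq: "(\<lambda>b. wait tau x b (Suc k)) = (\<lambda>b. max 0 (wait tau x b k + b (tau k) - x (tau k)))"
      using False by (simp add: wait_Suc)
    show ?thesis unfolding eq by measurable
  qed simp
qed simp

lemma (in finite_measure) integrable_wait:
  assumes "\<And>j. 1 \<le> j \<Longrightarrow> j < k \<Longrightarrow> integrable M (B (tau j))"
  shows "integrable M (\<lambda>\<xi>. wait tau x (\<lambda>j. B j \<xi>) k)"
  using assms
proof (induction k)
  case (Suc k)
  then have "integrable M (\<lambda>\<xi>. wait tau x (\<lambda>j. B j \<xi>) k)" "k \<noteq> 0 \<Longrightarrow> integrable M (B (tau k))"
    by simp_all
  then show ?case
    unfolding wait_Suc by (cases "k = 0") auto
qed simp

lemma (in finite_measure) integrable_idle: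
  assumes "\<And>j. 1 \<le> j \<Longrightarrow> j < k \<Longrightarrow> integrable M (B (tau j))"
  shows "integrable M (\<lambda>\<xi>. idle tau x (\<lambda>j. B j \<xi>) k)"
proof (cases k)
  case (Suc k')
  with assms have "integrable M (\<lambda>\<xi>. wait tau x (\<lambda>j. B j \<xi>) k')" "k' \<noteq> 0 \<Longrightarrow> integrable M (B (tau k'))"
    by (auto intro: integrable_wait)
  then show ?thesis
    unfolding Suc idle_Suc by (cases "k' = 0") auto
qed simp

lemma (in prob_space) indep_var_service_wait:
  assumes indep: "indep_vars (\<lambda>_. borel) B {1..n}" and tau: "tau permutes {1..n}" and k: "k \<in> {1..n}"
  shows "indep_var borel (B (tau k)) borel (\<lambda>\<xi>. wait tau x (\<lambda>j. B j \<xi>) k)"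
proof -
  define K where "K = tau ` {1..<k}"
  have "{tau k} \<inter> K = {}"
    by (simp add: K_def inj_image_mem_iff[OF permutes_inj[OF tau]])
  moreover have "{tau k} \<subseteq> {1..n}" "K \<subseteq> {1..n}"
  proof -
    have "tau j \<in> {1..n}" if "j \<in> {1..n}" for j
      using that by (simp only: permutes_in_image[OF tau])
    moreover have "{1..<k} \<subseteq> {1..n}"
      using k by auto
    ultimately show "{tau k} \<subseteq> {1..n}" "K \<subseteq> {1..n}"
      using k unfolding K_def by blast+
  qed
  moreover have "(\<lambda>b. b (tau k)) \<in> borel_measurable (PiM {tau k} (\<lambda>_. borel :: real measure))"
    by (rule measurable_component_singleton) simp
  moreover have "(\<lambda>b. wait tau x b k) \<in> borel_measurable (PiM K (\<lambda>_. borel :: real measure))"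
    by (rule wait_measurable_PiM) (simp add: K_def)
  ultimately have "indep_var
      borel ((\<lambda>b. b (tau k)) \<circ> (\<lambda>\<xi>. restrict (\<lambda>j. B j \<xi>) {tau k}))
      borel ((\<lambda>b. wait tau x b k) \<circ> (\<lambda>\<xi>. restrict (\<lambda>j. B j \<xi>) K))"
    by (rule indep_var_compose[OF indep_var_restrict[OF indep]])
  moreover have "(\<lambda>b. b (tau k)) \<circ> (\<lambda>\<xi>. restrict (\<lambda>j. B j \<xi>) {tau k}) = B (tau k)"
    by (simp add: comp_def)
  moreover have "(\<lambda>b. wait tau x b k) \<circ> (\<lambda>\<xi>. restrict (\<lambda>j. B j \<xi>) K)
      = (\<lambda>\<xi>. wait tau x (\<lambda>j. B j \<xi>) k)"
    by (auto simp: comp_def K_def intro!: wait_cong)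
  ultimately show ?thesis
    by simp
qed

lemma mult_le_weighted_positive_negative_part:
  fixes w d l :: real
  assumes "0 \<le> w" "w \<le> 1" and "l = 1 - w \<or> l = - w"
  shows "l * d \<le> w * max 0 (- d) + (1 - w) * max 0 d"
proof -
  have "(1 - w) * d \<le> (1 - w) * max 0 d"
    by (rule mult_left_mono) (use assms in auto)
  moreover have "w * (- d) \<le> w * max 0 (- d)"
    by (rule mult_left_mono) (use assms in auto)
  moreover have "0 \<le> w * max 0 (- d)" "0 \<le> (1 - w) * max 0 d"
    using assms(1,2) by auto
  ultimately show ?thesis
    using assms(3) by auto
qed

definition slot_cost ::
    "'a measure \<Rightarrow> (nat \<Rightarrow> 'a \<Rightarrow> real) \<Rightarrow> (nat \<Rightarrow> nat) \<Rightarrow> (nat \<Rightarrow> real) \<Rightarrow> real \<Rightarrow> nat \<Rightarrow> real"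
  where "slot_cost M B tau x w i =
    w * (\<integral>\<xi>. idle tau x (\<lambda>j. B j \<xi>) i \<partial>M)
    + (1 - w) * (\<integral>\<xi>. wait tau x (\<lambda>j. B j \<xi>) i \<partial>M)"

lemma cost_eq_sum_slot_cost:
  "cost M B n tau x w = (\<Sum>k=1..n-1. slot_cost M B tau x w (Suc k))"
proof (cases n)
  case (Suc n')
  have "cost M B n tau x w = (\<Sum>i=1..n. slot_cost M B tau x w i)"
    by (simp add: cost_def slot_cost_def sum_distrib_left sum.distrib)
  also have "\<dots> = (\<Sum>i=Suc 0..Suc n'. slot_cost M B tau x w i)"
    by (simp add: Suc del: sum.cl_ivl_Suc)
  also have "\<dots> = slot_cost M B tau x w 1 + (\<Sum>k=1..n'. slot_cost M B tau x w (Suc k))"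
    by (subst sum.shift_bounds_cl_Suc_ivl) (simp add: sum.atLeast_Suc_atMost del: sum.cl_ivl_Suc)
  finally show ?thesis
    by (simp add: Suc slot_cost_def)
qed (simp add: cost_def)

lemma (in prob_space) slot_cost_ge_test_function:
  assumes w: "0 \<le> w" "w \<le> 1"
    and L: "\<And>b. L b = 1 - w \<or> L b = - w" and [measurable]: "L \<in> borel_measurable borel"
    and L_int: "integrable M (\<lambda>\<xi>. L (B (tau k) \<xi>))"
    and LB_int: "integrable M (\<lambda>\<xi>. L (B (tau k) \<xi>) * B (tau k) \<xi>)"
    and B_int: "\<And>j. 1 \<le> j \<Longrightarrow> j < Suc k \<Longrightarrow> integrable M (B (tau j))"
    and indep: "indep_vars (\<lambda>_. borel) B {1..n}"
    and tau: "tau permutes {1..n}" and k: "k \<in> {1..n}"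
  shows "(\<integral>\<xi>. L (B (tau k) \<xi>) * B (tau k) \<xi> \<partial>M)
      + (\<integral>\<xi>. L (B (tau k) \<xi>) \<partial>M) * (\<integral>\<xi>. wait tau x (\<lambda>j. B j \<xi>) k - x (tau k) \<partial>M)
    \<le> slot_cost M B tau x w (Suc k)"
proof -
  define p where "p = tau k"
  define W where "W \<xi> = wait tau x (\<lambda>j. B j \<xi>) k" for \<xi>
  define D where "D \<xi> = B p \<xi> + (W \<xi> - x p)" for \<xi>
  note L_int = L_int[folded p_def] and LB_int = LB_int[folded p_def]
  have W_int: "integrable M (\<lambda>\<xi>. W \<xi> - x p)"
    unfolding W_def using B_int by (intro Bochner_Integration.integrable_diff integrable_wait) auto
  have "indep_var borel (L \<circ> B p) borel ((\<lambda>t. t - x p) \<circ> W)"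
    unfolding W_def p_def by (rule indep_var_compose[OF indep_var_service_wait[OF indep tau k]]) auto
  then have LW: "indep_var borel (\<lambda>\<xi>. L (B p \<xi>)) borel (\<lambda>\<xi>. W \<xi> - x p)"
    by (simp add: comp_def)
  have LW_int: "integrable M (\<lambda>\<xi>. L (B p \<xi>) * (W \<xi> - x p))"
    by (rule indep_var_integrable[OF LW L_int W_int])
  have LD_int: "integrable M (\<lambda>\<xi>. L (B p \<xi>) * D \<xi>)"
    using LB_int LW_int by (simp add: D_def distrib_left p_def)
  have "wait tau x (\<lambda>j. B j \<xi>) (Suc k) = max 0 (D \<xi>)"
    and "idle tau x (\<lambda>j. B j \<xi>) (Suc k) = max 0 (- D \<xi>)" for \<xi>
    using k by (simp_all add: wait_Suc idle_Suc D_def W_def p_def algebra_simps)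
  then have pointwise: "L (B p \<xi>) * D \<xi>
      \<le> w * idle tau x (\<lambda>j. B j \<xi>) (Suc k) + (1 - w) * wait tau x (\<lambda>j. B j \<xi>) (Suc k)" for \<xi>
    using w L by (simp add: mult_le_weighted_positive_negative_part)
  have "(\<integral>\<xi>. L (B p \<xi>) * B p \<xi> \<partial>M) + (\<integral>\<xi>. L (B p \<xi>) \<partial>M) * (\<integral>\<xi>. W \<xi> - x p \<partial>M)
      = (\<integral>\<xi>. L (B p \<xi>) * B p \<xi> \<partial>M) + (\<integral>\<xi>. L (B p \<xi>) * (W \<xi> - x p) \<partial>M)"
    by (simp add: indep_var_lebesgue_integral[OF LW L_int W_int])
  also have "\<dots> = (\<integral>\<xi>. L (B p \<xi>) * D \<xi> \<partial>M)"
    unfolding D_def distrib_left using LB_int LW_int by simp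
  also have "\<dots> \<le> (\<integral>\<xi>. w * idle tau x (\<lambda>j. B j \<xi>) (Suc k)
      + (1 - w) * wait tau x (\<lambda>j. B j \<xi>) (Suc k) \<partial>M)"
    using LD_int B_int pointwise
    by (intro integral_mono Bochner_Integration.integrable_add integrable_mult_right integrable_idle integrable_wait)
  also have "\<dots> = slot_cost M B tau x w (Suc k)"
    using B_int unfolding slot_cost_def by (simp add: integrable_idle integrable_wait)
  finally show ?thesis
    by (simp add: W_def p_def)
qed

lemma (in prob_space) slot_cost_ge:
  assumes w: "0 < w" "w < 1"
    and LN: "\<And>i. i \<in> {1..n} \<Longrightarrow> lognormal_rv M (B i) (m i) (s i)"
    and indep: "indep_vars (\<lambda>_. borel) B {1..n}"
    and tau: "tau permutes {1..n}" and k: "k \<in> {1..<n}"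
  shows "exp (m (tau k) + (s (tau k))\<^sup>2 / 2) * ((1 - w) - Phi (Q_Z (1 - w) - s (tau k)))
    \<le> slot_cost M B tau x w (Suc k)"
proof -
  define z where "z = Q_Z (1 - w)"
  define L where "L b = (if exp (m (tau k) + s (tau k) * z) \<le> b then 1 - w else - w)" for b
  have "\<And>j. j \<in> {1..n} \<Longrightarrow> tau j \<in> {1..n}"
    using permutes_in_image[OF tau] by blast
  then have LN_k: "lognormal_rv M (B (tau k)) (m (tau k)) (s (tau k))"
    and B_int: "\<And>j. 1 \<le> j \<Longrightarrow> j < Suc k \<Longrightarrow> integrable M (B (tau j))"
    using k LN lognormal_rv_integrable[OF LN] by auto
  have L_values: "\<And>b. L b = 1 - w \<or> L b = - w" and [measurable]: "L \<in> borel_measurable borel"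
    unfolding L_def by simp measurable
  have L_int: "integrable M (\<lambda>\<xi>. L (B (tau k) \<xi>))"
    unfolding L_def by (rule lognormal_rv_step(1)[OF LN_k])
  have LB_int: "integrable M (\<lambda>\<xi>. L (B (tau k) \<xi>) * B (tau k) \<xi>)"
    unfolding L_def by (rule lognormal_rv_step_mult(1)[OF LN_k])
  have "(\<integral>\<xi>. L (B (tau k) \<xi>) \<partial>M) = (1 - w) * (1 - Phi z) + (- w) * Phi z"
    unfolding L_def by (rule lognormal_rv_step(2)[OF LN_k])
  also have "Phi z = 1 - w"
    unfolding z_def using w by (intro Phi_Q_Z) auto
  finally have L_mean: "(\<integral>\<xi>. L (B (tau k) \<xi>) \<partial>M) = 0"
    by (simp add: algebra_simps)
  have "exp (m (tau k) + (s (tau k))\<^sup>2 / 2) * ((1 - w) - Phi (z - s (tau k)))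
      = (\<integral>\<xi>. L (B (tau k) \<xi>) * B (tau k) \<xi> \<partial>M)"
    unfolding L_def lognormal_rv_step_mult(2)[OF LN_k] by (simp add: algebra_simps)
  also have "\<dots> \<le> slot_cost M B tau x w (Suc k)"
    using slot_cost_ge_test_function[OF _ _ L_values _ L_int LB_int B_int indep tau] w k L_mean by auto
  finally show ?thesis
    by (simp add: z_def)
qed

lemma sum_initial_segment_le_permuted:
  fixes f :: "nat \<Rightarrow> 'a::ordered_ab_group_add"
  assumes tau: "tau permutes {1..n}" and max: "\<And>j. j \<in> {1..n} \<Longrightarrow> f j \<le> f n"
  shows "(\<Sum>i=1..n-1. f i) \<le> (\<Sum>k=1..n-1. f (tau k))"
proof (cases n)
  case (Suc n')
  have "(\<Sum>k=1..n'. f (tau k)) + f (tau n) = (\<Sum>k=1..n. f (tau k))"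
    by (simp add: Suc)
  also have "\<dots> = (\<Sum>i=1..n. f i)"
    using sum.permute[OF tau, of f] by (simp add: comp_def)
  also have "\<dots> = (\<Sum>i=1..n'. f i) + f n"
    by (simp add: Suc)
  finally have "(\<Sum>k=1..n'. f (tau k)) + f (tau n) = (\<Sum>i=1..n'. f i) + f n" .
  moreover have "f (tau n) \<le> f n"
    using max permutes_in_image[OF tau, of n] Suc by auto
  ultimately show ?thesis
    by (simp add: Suc) (metis add_le_cancel_right add_le_imp_le_left order.refl add.commute)
qed simp

theorem propositionC2:
  fixes M :: "'a measure" and B :: "nat \<Rightarrow> 'a \<Rightarrow> real"
    and m s :: "nat \<Rightarrow> real" and n :: nat and w :: real
    and tau :: "nat \<Rightarrow> nat" and x :: "nat \<Rightarrow> real"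
  assumes "prob_space M"
    and "n \<ge> 2"
    and "0 < w" "w < 1"
    and "\<And>i. i \<in> {1..n} \<Longrightarrow> lognormal_rv M (B i) (m i) (s i)"
    and "prob_space.indep_vars M (\<lambda>_. borel) B {1..n}"
    and "\<And>i j. 1 \<le> i \<Longrightarrow> i \<le> j \<Longrightarrow> j \<le> n \<Longrightarrow> m i \<le> m j"
    and "\<And>i j. 1 \<le> i \<Longrightarrow> i \<le> j \<Longrightarrow> j \<le> n \<Longrightarrow> (s i)\<^sup>2 \<le> (s j)\<^sup>2"
    and "tau permutes {1..n}"
    and "\<And>j. j \<in> {1..n} \<Longrightarrow> 0 \<le> x j"
  shows "cost M B n tau x w \<ge>
    ((1 - w) * measure std_normal {Q_Z (1 - w) - s 1..}
      - w * measure std_normal {..Q_Z (1 - w) - s 1})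
    * (\<Sum>i=1..n-1. exp (m i + (s i)\<^sup>2 / 2))"
proof -
  interpret prob_space M by fact
  define a where "a i = exp (m i + (s i)\<^sup>2 / 2)" for i
  define g where "g i = (1 - w) - Phi (Q_Z (1 - w) - s i)" for i
  have s_pos: "\<And>i. i \<in> {1..n} \<Longrightarrow> 0 < s i"
    using assms(5) by (auto simp: lognormal_rv_def)
  have g_nonneg: "0 \<le> g 1"
    using assms(2-4) s_pos[of 1] Phi_Q_Z_minus_le(2)[of "1 - w" "s 1" "s 1"] by (simp add: g_def)
  have g_mono: "g 1 \<le> g j" if "j \<in> {1..n}" for j
    using that assms(3,4) assms(8)[of 1 j] s_pos[of 1] s_pos[of j] Phi_Q_Z_minus_le(1)[of "1 - w" "s 1" "s j"]
    by (auto simp: g_def intro: power2_le_imp_le)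
  have a_le: "a j \<le> a n" if "j \<in> {1..n}" for j
    using assms(7)[of j n] assms(8)[of j n] that by (simp add: a_def)
  have "g 1 * (\<Sum>i=1..n-1. a i) \<le> g 1 * (\<Sum>k=1..n-1. a (tau k))"
    using a_le g_nonneg by (intro mult_left_mono sum_initial_segment_le_permuted[OF assms(9)])
  also have "\<dots> \<le> (\<Sum>k=1..n-1. a (tau k) * g (tau k))"
    using g_mono permutes_in_image[OF assms(9)]
    by (auto simp: sum_distrib_left mult.commute a_def intro!: sum_mono mult_left_mono)
  also have "\<dots> \<le> (\<Sum>k=1..n-1. slot_cost M B tau x w (Suc k))"
    using slot_cost_ge[OF assms(3-6,9)] by (auto simp: a_def g_def intro!: sum_mono)
  also have "\<dots> = cost M B n tau x w"
    by (rule cost_eq_sum_slot_cost[symmetric])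
  finally show ?thesis
    by (simp add: a_def g_def measure_std_normal_atLeast Phi_def[symmetric] algebra_simps)
qed

end
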